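(* Let $Y_1,Y_2,\ldots$ be i.i.d. random variables with mean $0$ and variance $1$, and let $\Sigma=((\sigma_{st}))_{s,t\ge1}$ be such that there is a sequence of graphs $G_n\in\mathscr G_n$ with $|E(G_n)|\to\infty$ satisfying $\lim_{n\to\infty}\frac{1}{|E(G_n)|}\sum_{v=1}^na_{s,v}a_{v,t}=\sigma_{st}$ for each fixed $s,t\ge1$. For $K\ge1$ let $\bm Y_K=(Y_1,\ldots,Y_K)^\top$, $\Sigma_K=((\sigma_{st}))_{1\le s,t\le K}$ and $W_K:=\bm Y_K^\top\Sigma_K\bm Y_K=\sum_{1\le s,t\le K}\sigma_{st}Y_sY_t$. Then each $W_K$ is nonnegative and $W_K$ converges in $L^1$, as $K\to\infty$, to some random variable $W_\infty=:\bm Y_\infty^\top\Sigma\bm Y_\infty$.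
   Context: $\mathscr G_n$: simple undirected graphs on $\{1,\ldots,n\}$ labeled so that degrees satisfy $d_1\ge\cdots\ge d_n$; $A(G_n)=((a_{u,v}))$ is the adjacency matrix and $E(G_n)$ the edge set. *)

theory Defs
  imports "HOL-Probability.Probability"
begin

definition simple_graph_on :: "nat \<Rightarrow> (nat \<Rightarrow> nat \<Rightarrow> bool) \<Rightarrow> bool" where
  "simple_graph_on n E \<longleftrightarrow>
     (\<forall>u v. E u v \<longrightarrow> u \<in> {1..n} \<and> v \<in> {1..n}) \<and>
     (\<forall>u v. E u v \<longrightarrow> E v u) \<and>
     (\<forall>u. \<not> E u u)"

definition degree :: "nat \<Rightarrow> (nat \<Rightarrow> nat \<Rightarrow> bool) \<Rightarrow> nat \<Rightarrow> nat" where
  "degree n E u = card {v \<in> {1..n}. E u v}"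

definition graph_class :: "nat \<Rightarrow> (nat \<Rightarrow> nat \<Rightarrow> bool) \<Rightarrow> bool" where
  "graph_class n E \<longleftrightarrow> simple_graph_on n E \<and>
     (\<forall>u w. 1 \<le> u \<longrightarrow> u \<le> w \<longrightarrow> w \<le> n \<longrightarrow> degree n E w \<le> degree n E u)"

text \<open>Adjacency matrix entries a_{u,v} (0 outside {1..n}).\<close>
definition adj :: "(nat \<Rightarrow> nat \<Rightarrow> bool) \<Rightarrow> nat \<Rightarrow> nat \<Rightarrow> real" where
  "adj E u v = (if E u v then 1 else 0)"

definition num_edges :: "nat \<Rightarrow> (nat \<Rightarrow> nat \<Rightarrow> bool) \<Rightarrow> nat" where
  "num_edges n E = card {(u, v). u \<in> {1..n} \<and> v \<in> {1..n} \<and> u < v \<and> E u v}"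

end

theory Submission
  imports Defs
begin

(* Sigma is the limit of the positive semidefinite matrices A(G_n)^2 / |E(G_n)|, so every
   Sigma_K is positive semidefinite, and tr Sigma_K <= 2 because tr A^2 = 2 |E|.  As the Y_s are
   orthonormal in L^2, E W_K = tr Sigma_K, which is increasing and bounded, hence Cauchy.
   Positive semidefiniteness controls the cross terms between {1..K} and {K+1..L}: for every
   e > 0, |W_L - W_K| <= e W_K + (1/e + 1) Q with Q the quadratic form of the block {K+1..L}, so
   E |W_L - W_K| <= 2 e + (1/e + 1) (tr Sigma_L - tr Sigma_K).  Hence (W_K) is Cauchy in L^1, and
   L^1 is complete. *)

definition quad_form :: "'i set \<Rightarrow> ('i \<Rightarrow> 'i \<Rightarrow> real) \<Rightarrow> ('i \<Rightarrow> real) \<Rightarrow> real" where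
  "quad_form S B x = (\<Sum>s\<in>S. \<Sum>t\<in>S. B s t * x s * x t)"

definition psd_on :: "'i set \<Rightarrow> ('i \<Rightarrow> 'i \<Rightarrow> real) \<Rightarrow> bool" where
  "psd_on S B \<longleftrightarrow> (\<forall>x. 0 \<le> quad_form S B x)"

lemma psd_on_diag_nonneg:
  assumes "psd_on S B" "finite S" "s \<in> S"
  shows "0 \<le> B s s"
proof -
  have "0 \<le> quad_form S B (\<lambda>t. if t = s then 1 else 0)"
    using assms(1) unfolding psd_on_def by blast
  also have "\<dots> = B s s"
    using assms(2,3) by (simp add: quad_form_def if_distrib[of "\<lambda>y. _ * y"] sum.delta cong: if_cong)
  finally show ?thesis .
qed

lemma psd_on_divide:
  assumes "psd_on S B" "0 \<le> c"
  shows "psd_on S (\<lambda>s t. B s t / c)"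
proof -
  have "quad_form S (\<lambda>s t. B s t / c) x = quad_form S B x / c" for x
    by (simp add: quad_form_def sum_divide_distrib)
  then show ?thesis using assms by (simp add: psd_on_def)
qed

lemma psd_on_limit:
  assumes "finite S"
    and lim: "\<And>s t. s \<in> S \<Longrightarrow> t \<in> S \<Longrightarrow> (\<lambda>n. B n s t) \<longlonglongrightarrow> C s t"
    and psd: "\<forall>\<^sub>F n in sequentially. psd_on S (B n)"
  shows "psd_on S C"
  unfolding psd_on_def
proof
  fix x
  have "(\<lambda>n. quad_form S (B n) x) \<longlonglongrightarrow> quad_form S C x"
    unfolding quad_form_def using assms(1) by (intro tendsto_intros lim)
  moreover have "\<forall>\<^sub>F n in sequentially. 0 \<le> quad_form S (B n) x"
    using psd by eventually_elim (simp add: psd_on_def)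
  ultimately show "0 \<le> quad_form S C x"
    by (rule tendsto_lowerbound) simp
qed

lemma quad_form_union:
  assumes "finite A" "finite B" "A \<inter> B = {}"
  shows "quad_form (A \<union> B) C x = quad_form A C x
    + ((\<Sum>s\<in>A. \<Sum>t\<in>B. C s t * x s * x t) + (\<Sum>s\<in>B. \<Sum>t\<in>A. C s t * x s * x t))
    + quad_form B C x"
  using assms by (simp add: quad_form_def sum.union_disjoint sum.distrib)

lemma quad_form_union_scaled:
  assumes "finite A" "finite B" "A \<inter> B = {}"
  shows "quad_form (A \<union> B) C (\<lambda>s. (if s \<in> A then l else 1) * x s) = l\<^sup>2 * quad_form A C x
    + l * ((\<Sum>s\<in>A. \<Sum>t\<in>B. C s t * x s * x t) + (\<Sum>s\<in>B. \<Sum>t\<in>A. C s t * x s * x t))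
    + quad_form B C x"
proof -
  have notA: "s \<in> B \<Longrightarrow> s \<notin> A" for s using assms(3) by auto
  show ?thesis
    unfolding quad_form_union[OF assms]
    by (simp add: quad_form_def sum_distrib_left distrib_left power2_eq_square notA mult_ac cong: sum.cong)
qed

lemma psd_quad_form_union_bound:
  assumes "finite A" "finite B" "A \<inter> B = {}" and psd: "psd_on (A \<union> B) C" and "e > 0"
  shows "\<bar>quad_form (A \<union> B) C x - quad_form A C x\<bar>
    \<le> e * quad_form A C x + (1/e + 1) * quad_form B C x"
proof -
  define a where "a = quad_form A C x"
  define b where "b = (\<Sum>s\<in>A. \<Sum>t\<in>B. C s t * x s * x t) + (\<Sum>s\<in>B. \<Sum>t\<in>A. C s t * x s * x t)"
  define c where "c = quad_form B C x"
  have nonneg: "0 \<le> l\<^sup>2 * a + l * b + c" for l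
    using psd quad_form_union_scaled[OF assms(1-3), of C l x]
    unfolding psd_on_def a_def b_def c_def by metis
  have "0 \<le> c" using nonneg[of 0] by simp
  moreover have "\<bar>b\<bar> \<le> e * a + c / e"
    using nonneg[of e] nonneg[of "-e"] \<open>e > 0\<close>
    by (simp add: abs_le_iff field_simps power2_eq_square)
  ultimately have "\<bar>b + c\<bar> \<le> e * a + (1/e + 1) * c"
    by (simp add: abs_le_iff algebra_simps)
  then show ?thesis
    unfolding quad_form_union[OF assms(1-3)] a_def b_def c_def by simp
qed

definition adj_square :: "nat \<Rightarrow> (nat \<Rightarrow> nat \<Rightarrow> bool) \<Rightarrow> nat \<Rightarrow> nat \<Rightarrow> real" where
  "adj_square n E s t = (\<Sum>v = 1..n. adj E s v * adj E v t)"

lemma adj_sym: "simple_graph_on n E \<Longrightarrow> adj E u v = adj E v u"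
  unfolding simple_graph_on_def adj_def by metis

lemma quad_form_adj_square:
  assumes "simple_graph_on n E"
  shows "quad_form S (adj_square n E) x = (\<Sum>v = 1..n. (\<Sum>s\<in>S. x s * adj E s v)\<^sup>2)"
proof -
  have "quad_form S (adj_square n E) x
      = (\<Sum>s\<in>S. \<Sum>t\<in>S. \<Sum>v = 1..n. (x s * adj E s v) * (x t * adj E t v))"
    unfolding quad_form_def adj_square_def sum_distrib_right
    by (intro sum.cong refl) (simp add: adj_sym[OF assms, of _ t for t] mult_ac)
  also have "\<dots> = (\<Sum>v = 1..n. \<Sum>s\<in>S. \<Sum>t\<in>S. (x s * adj E s v) * (x t * adj E t v))"
    by (subst sum.swap, rule sum.cong[OF refl], rule sum.swap)
  also have "\<dots> = (\<Sum>v = 1..n. (\<Sum>s\<in>S. x s * adj E s v)\<^sup>2)"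
    by (simp add: power2_eq_square sum_product)
  finally show ?thesis .
qed

lemma psd_on_adj_square: "simple_graph_on n E \<Longrightarrow> psd_on S (adj_square n E)"
  by (simp add: psd_on_def quad_form_adj_square sum_nonneg)

lemma adj_square_diag:
  assumes "simple_graph_on n E"
  shows "adj_square n E s s = real (degree n E s)"
proof -
  have "adj_square n E s s = (\<Sum>v = 1..n. if E s v then 1 else 0)"
    using assms unfolding adj_square_def
    by (intro sum.cong refl) (auto simp: adj_def simple_graph_on_def)
  then show ?thesis by (simp add: degree_def sum.If_cases Int_def)
qed

lemma degree_eq_0_outside: "simple_graph_on n E \<Longrightarrow> s \<notin> {1..n} \<Longrightarrow> degree n E s = 0"
  by (auto simp: degree_def simple_graph_on_def)

lemma sum_degree_eq_twice_num_edges: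
  assumes g: "simple_graph_on n E"
  shows "(\<Sum>s = 1..n. degree n E s) = 2 * num_edges n E"
proof -
  define D where "D = {(u, v). u \<in> {1..n} \<and> v \<in> {1..n} \<and> u < v \<and> E u v}"
  have "(SIGMA s:{1..n}. {v \<in> {1..n}. E s v}) = D \<union> prod.swap ` D"
  proof (intro set_eqI iffI)
    fix p assume "p \<in> (SIGMA s:{1..n}. {v \<in> {1..n}. E s v})"
    then obtain u v where p: "p = (u, v)" "u \<in> {1..n}" "v \<in> {1..n}" "E u v" by auto
    then have "u \<noteq> v" "E v u" using g unfolding simple_graph_on_def by metis+
    then show "p \<in> D \<union> prod.swap ` D"
      using p unfolding D_def by (cases "u < v") (auto intro!: image_eqI[of _ _ "(v, u)"])
  qed (use g in \<open>auto simp: D_def simple_graph_on_def\<close>)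
  moreover have "D \<inter> prod.swap ` D = {}" by (auto simp: D_def)
  moreover have "finite D" by (rule finite_subset[of _ "{1..n} \<times> {1..n}"]) (auto simp: D_def)
  ultimately have "card (SIGMA s:{1..n}. {v \<in> {1..n}. E s v}) = 2 * card D"
    by (simp add: card_Un_disjoint card_image)
  then show ?thesis
    by (simp add: card_SigmaI degree_def num_edges_def D_def)
qed

lemma sum_adj_square_diag_le:
  assumes g: "simple_graph_on n E" and "finite S"
  shows "(\<Sum>s\<in>S. adj_square n E s s) \<le> 2 * real (num_edges n E)"
proof -
  have "(\<Sum>s\<in>S. adj_square n E s s) = (\<Sum>s\<in>S. real (degree n E s))"
    using g by (simp add: adj_square_diag)
  also have "\<dots> = (\<Sum>s\<in>S \<inter> {1..n}. real (degree n E s))"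
    using assms by (intro sum.mono_neutral_right) (auto simp: degree_eq_0_outside)
  also have "\<dots> \<le> (\<Sum>s = 1..n. real (degree n E s))"
    by (intro sum_mono2) auto
  also have "\<dots> = 2 * real (num_edges n E)"
    using sum_degree_eq_twice_num_edges[OF g] by (metis of_nat_mult of_nat_numeral of_nat_sum)
  finally show ?thesis .
qed

lemma psd_on_graph_limit:
  assumes "\<And>n. simple_graph_on n (G n)"
    and lim: "\<And>s t. s \<ge> 1 \<Longrightarrow> t \<ge> 1 \<Longrightarrow>
      (\<lambda>n. adj_square n (G n) s t / real (num_edges n (G n))) \<longlonglongrightarrow> C s t"
    and "finite S" "S \<subseteq> {1..}"
  shows "psd_on S C"
proof (rule psd_on_limit[OF \<open>finite S\<close>])
  show "(\<lambda>n. adj_square n (G n) s t / real (num_edges n (G n))) \<longlonglongrightarrow> C s t"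
    if "s \<in> S" "t \<in> S" for s t
    using that assms(4) by (intro lim) auto
  show "\<forall>\<^sub>F n in sequentially. psd_on S (\<lambda>s t. adj_square n (G n) s t / real (num_edges n (G n)))"
    using assms(1) by (intro always_eventually allI psd_on_divide psd_on_adj_square) simp_all
qed

lemma sum_diag_graph_limit_le:
  assumes g: "\<And>n. simple_graph_on n (G n)"
    and lim: "\<And>s t. s \<ge> 1 \<Longrightarrow> t \<ge> 1 \<Longrightarrow>
      (\<lambda>n. adj_square n (G n) s t / real (num_edges n (G n))) \<longlonglongrightarrow> C s t"
    and "finite S" "S \<subseteq> {1..}"
  shows "(\<Sum>s\<in>S. C s s) \<le> 2"
proof (rule LIMSEQ_le_const2)
  show "(\<lambda>n. \<Sum>s\<in>S. adj_square n (G n) s s / real (num_edges n (G n))) \<longlonglongrightarrow> (\<Sum>s\<in>S. C s s)"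
    using assms by (intro tendsto_sum lim) auto
  have "(\<Sum>s\<in>S. adj_square n (G n) s s / real (num_edges n (G n))) \<le> 2" for n
    using sum_adj_square_diag_le[OF g \<open>finite S\<close>, of n]
    by (cases "num_edges n (G n) = 0") (simp_all add: pos_divide_le_eq flip: sum_divide_distrib)
  then show "\<exists>N. \<forall>n\<ge>N. (\<Sum>s\<in>S. adj_square n (G n) s s / real (num_edges n (G n))) \<le> 2"
    by blast
qed

lemma same_distr_integral:
  fixes X Z :: "'a \<Rightarrow> 'b::topological_space" and g :: "'b \<Rightarrow> real"
  assumes X: "X \<in> borel_measurable M" and Z: "Z \<in> borel_measurable M"
    and same: "distr M borel X = distr M borel Z" and g: "g \<in> borel_measurable borel"
  shows "integrable M (\<lambda>x. g (X x)) \<longleftrightarrow> integrable M (\<lambda>x. g (Z x))"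
    and "(\<integral>x. g (X x) \<partial>M) = (\<integral>x. g (Z x) \<partial>M)"
proof -
  show "integrable M (\<lambda>x. g (X x)) \<longleftrightarrow> integrable M (\<lambda>x. g (Z x))"
    using integrable_distr_eq[OF X g] integrable_distr_eq[OF Z g] same by simp
  show "(\<integral>x. g (X x) \<partial>M) = (\<integral>x. g (Z x) \<partial>M)"
    using integral_distr[OF X g] integral_distr[OF Z g] same by simp
qed

definition orthonormal_on :: "'a measure \<Rightarrow> ('i \<Rightarrow> 'a \<Rightarrow> real) \<Rightarrow> 'i set \<Rightarrow> bool" where
  "orthonormal_on M Y I \<longleftrightarrow> (\<forall>s\<in>I. \<forall>t\<in>I. integrable M (\<lambda>x. Y s x * Y t x) \<and>
     (\<integral>x. Y s x * Y t x \<partial>M) = (if s = t then 1 else 0))"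

lemma orthonormal_on_subset: "orthonormal_on M Y I \<Longrightarrow> J \<subseteq> I \<Longrightarrow> orthonormal_on M Y J"
  unfolding orthonormal_on_def by blast

lemma (in prob_space) indep_vars_orthonormal_on:
  assumes indep: "indep_vars (\<lambda>_. borel) Y I"
    and mean: "\<And>i. i \<in> I \<Longrightarrow> integrable M (Y i) \<and> expectation (Y i) = 0"
    and second: "\<And>i. i \<in> I \<Longrightarrow> integrable M (\<lambda>x. (Y i x)\<^sup>2) \<and> expectation (\<lambda>x. (Y i x)\<^sup>2) = 1"
  shows "orthonormal_on M Y I"
  unfolding orthonormal_on_def
proof (intro ballI conjI)
  fix s t assume s: "s \<in> I" and t: "t \<in> I"
  show "integrable M (\<lambda>x. Y s x * Y t x)"
  proof (rule Bochner_Integration.integrable_bound)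
    show "integrable M (\<lambda>x. (Y s x)\<^sup>2 + (Y t x)\<^sup>2)" using second s t by auto
    have [measurable]: "Y s \<in> borel_measurable M" "Y t \<in> borel_measurable M"
      using mean s t by auto
    show "(\<lambda>x. Y s x * Y t x) \<in> borel_measurable M" by measurable
    have "\<bar>a * b\<bar> \<le> a\<^sup>2 + b\<^sup>2" for a b :: real
    proof -
      have "2 * (\<bar>a\<bar> * \<bar>b\<bar>) \<le> a\<^sup>2 + b\<^sup>2"
        using sum_squares_bound[of "\<bar>a\<bar>" "\<bar>b\<bar>"] by (simp add: mult.assoc)
      then show ?thesis unfolding abs_mult
        using mult_nonneg_nonneg[OF abs_ge_zero abs_ge_zero, of a b] by linarith
    qed
    then show "AE x in M. norm (Y s x * Y t x) \<le> norm ((Y s x)\<^sup>2 + (Y t x)\<^sup>2)" by simp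
  qed
  show "expectation (\<lambda>x. Y s x * Y t x) = (if s = t then 1 else 0)"
  proof (cases "s = t")
    case True
    then show ?thesis using second s by (simp add: power2_eq_square)
  next
    case False
    have "indep_vars (\<lambda>_. borel) Y {s, t}"
      using indep_vars_subset[OF indep] s t by auto
    then have "expectation (\<lambda>x. \<Prod>i\<in>{s, t}. Y i x) = (\<Prod>i\<in>{s, t}. expectation (Y i))"
      using mean s t by (intro indep_vars_lebesgue_integral) auto
    then show ?thesis using False mean s by simp
  qed
qed

lemma integral_quad_form_orthonormal:
  assumes "finite S" and orth: "orthonormal_on M Y S"
  shows "integrable M (\<lambda>x. quad_form S C (\<lambda>s. Y s x))"
    and "(\<integral>x. quad_form S C (\<lambda>s. Y s x) \<partial>M) = (\<Sum>s\<in>S. C s s)"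
proof -
  have quad: "quad_form S C (\<lambda>s. Y s x) = (\<Sum>s\<in>S. \<Sum>t\<in>S. C s t * (Y s x * Y t x))" for x
    by (simp add: quad_form_def mult.assoc)
  show "integrable M (\<lambda>x. quad_form S C (\<lambda>s. Y s x))"
    using orth unfolding quad orthonormal_on_def by auto
  have "(\<integral>x. quad_form S C (\<lambda>s. Y s x) \<partial>M) = (\<Sum>s\<in>S. \<Sum>t\<in>S. C s t * (if s = t then 1 else 0))"
    using orth unfolding quad orthonormal_on_def by (simp add: integrable_sum)
  also have "\<dots> = (\<Sum>s\<in>S. C s s)"
    using \<open>finite S\<close> by (simp add: if_distrib sum.delta cong: if_cong)
  finally show "(\<integral>x. quad_form S C (\<lambda>s. Y s x) \<partial>M) = (\<Sum>s\<in>S. C s s)" .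
qed

lemma L1_dist_quad_form_union_le:
  assumes AB: "finite A" "finite B" "A \<inter> B = {}"
    and psd: "psd_on (A \<union> B) C" and orth: "orthonormal_on M Y (A \<union> B)" and "e > 0"
  shows "(\<integral>x. \<bar>quad_form (A \<union> B) C (\<lambda>s. Y s x) - quad_form A C (\<lambda>s. Y s x)\<bar> \<partial>M)
    \<le> e * (\<Sum>s\<in>A. C s s) + (1/e + 1) * (\<Sum>s\<in>B. C s s)"
proof -
  have orthA: "orthonormal_on M Y A" and orthB: "orthonormal_on M Y B"
    using orth by (auto elim: orthonormal_on_subset)
  note int = integral_quad_form_orthonormal[OF _ orthA, of C]
    integral_quad_form_orthonormal[OF _ orthB, of C] integral_quad_form_orthonormal[OF _ orth, of C]
  have "(\<integral>x. \<bar>quad_form (A \<union> B) C (\<lambda>s. Y s x) - quad_form A C (\<lambda>s. Y s x)\<bar> \<partial>M)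
      \<le> (\<integral>x. e * quad_form A C (\<lambda>s. Y s x) + (1/e + 1) * quad_form B C (\<lambda>s. Y s x) \<partial>M)"
    using AB int psd_quad_form_union_bound[OF AB psd \<open>e > 0\<close>]
    by (intro integral_mono) auto
  also have "\<dots> = e * (\<Sum>s\<in>A. C s s) + (1/e + 1) * (\<Sum>s\<in>B. C s s)"
    using AB int by simp
  finally show ?thesis .
qed

lemma nn_integral_norm_diff_limit_le:
  fixes g :: "nat \<Rightarrow> 'a \<Rightarrow> 'b::{banach, second_countable_topology}"
  assumes [measurable]: "h \<in> borel_measurable M" "\<And>i. g i \<in> borel_measurable M"
    and lim: "AE x in M. (\<lambda>i. g i x) \<longlonglongrightarrow> f x"
    and bound: "\<forall>\<^sub>F i in sequentially. (\<integral>\<^sup>+x. norm (h x - g i x) \<partial>M) \<le> e"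
  shows "(\<integral>\<^sup>+x. norm (h x - f x) \<partial>M) \<le> e"
proof -
  have "(\<integral>\<^sup>+x. norm (h x - f x) \<partial>M) = (\<integral>\<^sup>+x. liminf (\<lambda>i. ennreal (norm (h x - g i x))) \<partial>M)"
  proof (rule nn_integral_cong_AE)
    show "AE x in M. ennreal (norm (h x - f x)) = liminf (\<lambda>i. ennreal (norm (h x - g i x)))"
      using lim
    proof eventually_elim
      case (elim x)
      have "(\<lambda>i. ennreal (norm (h x - g i x))) \<longlonglongrightarrow> ennreal (norm (h x - f x))"
        by (intro tendsto_ennrealI tendsto_intros elim)
      from lim_imp_Liminf[OF _ this] show ?case by simp
    qed
  qed
  also have "\<dots> \<le> liminf (\<lambda>i. \<integral>\<^sup>+x. norm (h x - g i x) \<partial>M)"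
    by (rule nn_integral_liminf) measurable
  also have "\<dots> \<le> e"
    using bound by (intro Liminf_le) simp_all
  finally show ?thesis .
qed

lemma L1_Cauchy_imp_L1_convergent:
  fixes s :: "nat \<Rightarrow> 'a \<Rightarrow> 'b::{banach, second_countable_topology}"
  assumes int: "\<And>n. integrable M (s n)"
    and Cauchy: "\<And>e. e > 0 \<Longrightarrow> \<exists>N. \<forall>i\<ge>N. \<forall>j\<ge>N. (\<integral>x. norm (s i x - s j x) \<partial>M) < e"
  shows "\<exists>f. integrable M f \<and> (\<lambda>n. \<integral>x. norm (s n x - f x) \<partial>M) \<longlonglongrightarrow> 0"
proof -
  have [measurable]: "\<And>n. s n \<in> borel_measurable M" using int by auto
  obtain r where r: "strict_mono r" "AE x in M. Cauchy (\<lambda>i. s (r i) x)"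
    using cauchy_L1_AE_cauchy_subseq[OF int Cauchy] by blast
  define f where "f x = lim (\<lambda>i. s (r i) x)" for x
  have [measurable]: "f \<in> borel_measurable M" unfolding f_def by measurable
  have lim: "AE x in M. (\<lambda>i. s (r i) x) \<longlonglongrightarrow> f x"
    using r(2) by eventually_elim (simp add: f_def Cauchy_convergent_iff convergent_LIMSEQ_iff)
  have close: "(\<integral>\<^sup>+x. norm (s n x - f x) \<partial>M) \<le> ennreal e"
    if N: "\<forall>i\<ge>N. \<forall>j\<ge>N. (\<integral>x. norm (s i x - s j x) \<partial>M) < e" and "n \<ge> N" for e n N
  proof (rule nn_integral_norm_diff_limit_le[OF _ _ lim])
    have "(\<integral>\<^sup>+x. norm (s n x - s (r i) x) \<partial>M) \<le> ennreal e" if "i \<ge> N" for i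
    proof -
      have "r i \<ge> N" using seq_suble[OF r(1), of i] that by linarith
      then have "(\<integral>x. norm (s n x - s (r i) x) \<partial>M) \<le> e"
        using N \<open>n \<ge> N\<close> by (auto intro: less_imp_le)
      then show ?thesis
        by (subst nn_integral_eq_integral) (auto intro!: int ennreal_leI)
    qed
    then show "\<forall>\<^sub>F i in sequentially. (\<integral>\<^sup>+x. norm (s n x - s (r i) x) \<partial>M) \<le> ennreal e"
      unfolding eventually_sequentially by blast
  qed measurable
  obtain N1 where N1: "\<forall>i\<ge>N1. \<forall>j\<ge>N1. (\<integral>x. norm (s i x - s j x) \<partial>M) < 1"
    using Cauchy[of 1] by auto
  have "integrable M (\<lambda>x. s N1 x - f x)"
    using close[OF N1 order.refl] by (intro integrableI_bounded) (auto simp: le_less_trans)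
  then have "integrable M (\<lambda>x. s N1 x - (s N1 x - f x))"
    using int by (rule Bochner_Integration.integrable_diff[rotated])
  then have f_int: "integrable M f" by simp
  have "(\<lambda>n. \<integral>x. norm (s n x - f x) \<partial>M) \<longlonglongrightarrow> 0"
  proof (rule LIMSEQ_I)
    fix e :: real assume "e > 0"
    then obtain N where N: "\<forall>i\<ge>N. \<forall>j\<ge>N. (\<integral>x. norm (s i x - s j x) \<partial>M) < e/2"
      using Cauchy[of "e/2"] by auto
    have "norm ((\<integral>x. norm (s n x - f x) \<partial>M) - 0) < e" if "n \<ge> N" for n
    proof -
      have "(\<integral>x. norm (s n x - f x) \<partial>M) = enn2real (\<integral>\<^sup>+x. norm (s n x - f x) \<partial>M)"
        by (rule integral_eq_nn_integral) auto
      also have "\<dots> \<le> e/2"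
        using close[OF N that] \<open>e > 0\<close> by (intro enn2real_leI) auto
      finally show ?thesis using \<open>e > 0\<close> by simp
    qed
    then show "\<exists>N. \<forall>n\<ge>N. norm ((\<integral>x. norm (s n x - f x) \<partial>M) - 0) < e" by blast
  qed
  with f_int show ?thesis by blast
qed

lemma convergent_sum_diag_psd:
  fixes C :: "nat \<Rightarrow> nat \<Rightarrow> real"
  assumes psd: "\<And>K. psd_on {1..K} C" and trace: "\<And>K. (\<Sum>s = 1..K. C s s) \<le> c"
  shows "convergent (\<lambda>K. \<Sum>s = 1..K. C s s)"
proof (rule Bseq_mono_convergent)
  show mono: "\<forall>i j. i \<le> j \<longrightarrow> (\<Sum>s = 1..i. C s s) \<le> (\<Sum>s = 1..j. C s s)"
    using psd_on_diag_nonneg[OF psd] by (auto intro!: sum_mono2)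
  show "Bseq (\<lambda>K. \<Sum>s = 1..K. C s s)"
    using mono[rule_format, of 0] trace by (intro BseqI'[of _ c]) simp
qed

lemma quad_form_partial_sums_L1_Cauchy:
  fixes C :: "nat \<Rightarrow> nat \<Rightarrow> real"
  assumes psd: "\<And>K. psd_on {1..K} C" and trace: "\<And>K. (\<Sum>s = 1..K. C s s) \<le> c"
    and orth: "orthonormal_on M Y {1..}" and "e > 0"
  shows "\<exists>N. \<forall>i\<ge>N. \<forall>j\<ge>N.
    (\<integral>x. norm (quad_form {1..i} C (\<lambda>s. Y s x) - quad_form {1..j} C (\<lambda>s. Y s x)) \<partial>M) < e"
proof -
  define T where "T K = (\<Sum>s = 1..K. C s s)" for K
  define W where "W K x = quad_form {1..K} C (\<lambda>s. Y s x)" for K x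
  have split: "{1..j} = {1..i} \<union> {i<..j}" "{1..i} \<inter> {i<..j} = {}" if "i \<le> j" for i j :: nat
    using that by auto
  have increment: "T j - T i = (\<Sum>s\<in>{i<..j}. C s s)" if "i \<le> j" for i j
    unfolding T_def split(1)[OF that] using split(2)[OF that] by (simp add: sum.union_disjoint)
  have "0 \<le> c" using trace[of 0] by simp
  have "Cauchy T"
    unfolding T_def by (rule convergent_Cauchy[OF convergent_sum_diag_psd[OF psd trace]])
  define d where "d = e / (2 * (c + 1))"
  define q where "q = 1/d + 1"
  define \<eta> where "\<eta> = e / (2 * q)"
  have "d > 0" using \<open>e > 0\<close> \<open>0 \<le> c\<close> by (simp add: d_def)
  then have "q > 0" by (simp add: q_def add_pos_pos)
  then have "\<eta> > 0" using \<open>e > 0\<close> by (simp add: \<eta>_def)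
  then obtain N where N: "\<And>i j. N \<le> i \<Longrightarrow> N \<le> j \<Longrightarrow> dist (T i) (T j) < \<eta>"
    using metric_CauchyD[OF \<open>Cauchy T\<close>] by blast
  have close: "(\<integral>x. norm (W j x - W i x) \<partial>M) < e" if "N \<le> i" "i \<le> j" for i j
  proof -
    have sub: "{1..i} \<union> {i<..j} \<subseteq> {1..}" by auto
    have "(\<integral>x. norm (W j x - W i x) \<partial>M)
        \<le> d * (\<Sum>s = 1..i. C s s) + (1/d + 1) * (\<Sum>s\<in>{i<..j}. C s s)"
      using L1_dist_quad_form_union_le[OF _ _ split(2)[OF \<open>i \<le> j\<close>] _
          orthonormal_on_subset[OF orth sub] \<open>d > 0\<close>]
        psd[of j]
      unfolding W_def split(1)[OF \<open>i \<le> j\<close>] by auto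
    also have "\<dots> = d * T i + q * (T j - T i)"
      unfolding increment[OF \<open>i \<le> j\<close>] by (simp add: T_def q_def)
    also have "d * T i \<le> d * c"
      using trace \<open>d > 0\<close> by (simp add: T_def)
    also have "d * c < e / 2"
      using \<open>e > 0\<close> \<open>0 \<le> c\<close> by (simp add: d_def field_simps)
    also have "q * (T j - T i) < e / 2"
    proof -
      have "T j - T i < \<eta>" using N[of j i] that by (simp add: dist_real_def)
      then show ?thesis
        using \<open>q > 0\<close> unfolding \<eta>_def by (simp add: pos_less_divide_eq mult_ac)
    qed
    finally show ?thesis by simp
  qed
  show ?thesis
    unfolding W_def[symmetric]
  proof (intro exI allI impI)
    fix i j assume "N \<le> i" "N \<le> j"
    then show "(\<integral>x. norm (W i x - W j x) \<partial>M) < e"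
      using close[of i j] close[of j i] by (cases "i \<le> j") (simp_all add: abs_minus_commute)
  qed
qed

theorem lemma3p13:
  fixes M :: "'a measure" and Y :: "nat \<Rightarrow> 'a \<Rightarrow> real"
    and \<sigma> :: "nat \<Rightarrow> nat \<Rightarrow> real" and G :: "nat \<Rightarrow> nat \<Rightarrow> nat \<Rightarrow> bool"
  assumes M: "prob_space M"
    and rv: "\<And>i. i \<ge> 1 \<Longrightarrow> Y i \<in> borel_measurable M"
    and indep: "prob_space.indep_vars M (\<lambda>_. borel) Y {1..}"
    and ident: "\<And>i. i \<ge> 1 \<Longrightarrow> distr M borel (Y i) = distr M borel (Y 1)"
    and int1: "integrable M (Y 1)"
    and mean0: "prob_space.expectation M (Y 1) = 0"
    and int2: "integrable M (\<lambda>x. (Y 1 x)\<^sup>2)"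
    and var1: "prob_space.variance M (Y 1) = 1"
    and Gn: "\<And>n. graph_class n (G n)"
    and edges: "filterlim (\<lambda>n. num_edges n (G n)) at_top sequentially"
    and sigma: "\<And>s t. s \<ge> 1 \<Longrightarrow> t \<ge> 1 \<Longrightarrow>
       (\<lambda>n. (\<Sum>v = 1..n. adj (G n) s v * adj (G n) v t) / real (num_edges n (G n)))
         \<longlonglongrightarrow> \<sigma> s t"
  defines "W \<equiv> (\<lambda>K x. \<Sum>s = 1..K. \<Sum>t = 1..K. \<sigma> s t * Y s x * Y t x)"
  shows "(\<forall>K\<ge>1. \<forall>x\<in>space M. W K x \<ge> 0) \<and>
         (\<forall>K. integrable M (W K)) \<and>
         (\<exists>Winf. integrable M Winf \<and>
            (\<lambda>K. \<integral>x. \<bar>W K x - Winf x\<bar> \<partial>M) \<longlonglongrightarrow> 0)"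
proof -
  interpret prob_space M by (rule M)
  have graphs: "\<And>n. simple_graph_on n (G n)" using Gn by (simp add: graph_class_def)
  note lim = sigma[folded adj_square_def]
  have "integrable M (Y i) \<and> expectation (Y i) = 0" if "i \<ge> 1" for i
    using same_distr_integral[OF rv[OF that] rv[of 1] ident[OF that], of "\<lambda>z. z"] int1 mean0
    by simp
  moreover have "integrable M (\<lambda>x. (Y i x)\<^sup>2) \<and> expectation (\<lambda>x. (Y i x)\<^sup>2) = 1" if "i \<ge> 1" for i
    using same_distr_integral[OF rv[OF that] rv[of 1] ident[OF that], of "\<lambda>z. z\<^sup>2"] int2 var1 mean0
    by simp
  ultimately have orth: "orthonormal_on M Y {1..}"
    by (intro indep_vars_orthonormal_on[OF indep]) auto
  have psd: "psd_on {1..K} \<sigma>" for K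
    by (rule psd_on_graph_limit[OF graphs lim]) auto
  have trace: "(\<Sum>s = 1..K. \<sigma> s s) \<le> 2" for K
    by (rule sum_diag_graph_limit_le[OF graphs lim]) auto
  have W: "W = (\<lambda>K x. quad_form {1..K} \<sigma> (\<lambda>s. Y s x))"
    unfolding W_def quad_form_def ..
  have integrable: "integrable M (W K)" for K
    unfolding W using orthonormal_on_subset[OF orth] by (intro integral_quad_form_orthonormal(1)) auto
  moreover have "\<exists>Winf. integrable M Winf \<and> (\<lambda>K. \<integral>x. \<bar>W K x - Winf x\<bar> \<partial>M) \<longlonglongrightarrow> 0"
    using L1_Cauchy_imp_L1_convergent[of M W, OF integrable]
      quad_form_partial_sums_L1_Cauchy[OF psd trace orth]
    by (simp add: W)
  moreover have "0 \<le> W K x" for K x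
    using psd by (simp add: W psd_on_def)
  ultimately show ?thesis by blast
qed

end
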